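(* Let $\bar x\in S\subset\Phi=g^{-1}(K)$ and $d\in T_{\Phi,S}(\bar x)$. Then for every $\varepsilon>0$, $$T^2_{\Phi,S}(\bar x;d)\subset\{w\in\mathbb{R}^n:\nabla g(\bar x)w+\nabla^2g(\bar x)(d,d)\in T^2_{K,g_\varepsilon(S)}(g(\bar x);\nabla g(\bar x)d)\}$$ and $$T''_{\Phi,S}(\bar x;d)\subset\{w\in\mathbb{R}^n:\nabla g(\bar x)w\in T''_{K,g_\varepsilon(S)}(g(\bar x);\nabla g(\bar x)d)\},$$ where $g_\varepsilon(S):=g(S)+\varepsilon\,\mathrm{diam}(S)B_{\mathbb{R}^m}$.
   Context: $g:\mathbb{R}^n\to\mathbb{R}^m$ is twice continuously differentiable, $K\subset\mathbb{R}^m$ closed, $\Phi:=\{x:g(x)\in K\}$, $S\subset\Phi$; $g(S):=\{g(x):x\in S\}$; $B_{\mathbb{R}^m}$ is the closed unit ball and $\mathrm{diam}(S)$ the diameter of $S$ (if $\mathrm{diam}(S)=+\infty$, $g_\varepsilon(S)$ is read as $\mathbb{R}^m$). $\nabla^2g(x)(d,d):=(d^T\nabla^2g_i(x)d)_{i=1}^m$. For sets $\Lambda,A\subset\mathbb{R}^p$ and $\bar z\in\Lambda$: $T_{\Lambda,A}(\bar z):=\{d:\exists t_k\downarrow0,\ u_k\in A,u_k\to\bar z,\ d_k\to d,\ u_k+t_kd_k\in\Lambda\}$; for $d\in T_{\Lambda,A}(\bar z)$, the outer second-order tangent set with respect to $A$ is $T^2_{\Lambda,A}(\bar z;d):=\{w:\exists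 t_k\downarrow0,\ u_k\in A,u_k\to\bar z,\ w_k\to w,\ u_k+t_kd+\tfrac12t_k^2w_k\in\Lambda\}$, and the asymptotic second-order tangent cone with respect to $A$ is $T''_{\Lambda,A}(\bar z;d):=\{w:\exists(t_k,r_k)\downarrow(0,0),\ t_k/r_k\to0,\ u_k\in A,u_k\to\bar z,\ w_k\to w,\ u_k+t_kd+\tfrac12t_kr_kw_k\in\Lambda\}$. *)

theory Defs
  imports "HOL-Analysis.Analysis"
begin

definition tcone_rel :: "'a::real_normed_vector set \<Rightarrow> 'a set \<Rightarrow> 'a \<Rightarrow> 'a set" where
  "tcone_rel \<Lambda> A z = {d. \<exists>t u dd. (\<forall>k. t k > 0) \<and> t \<longlonglongrightarrow> 0 \<and>
      (\<forall>k. u k \<in> A) \<and> u \<longlonglongrightarrow> z \<and> dd \<longlonglongrightarrow> d \<and>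
      (\<forall>k. u k + t k *\<^sub>R dd k \<in> \<Lambda>)}"

definition tset2_rel :: "'a::real_normed_vector set \<Rightarrow> 'a set \<Rightarrow> 'a \<Rightarrow> 'a \<Rightarrow> 'a set" where
  "tset2_rel \<Lambda> A z d = {w. \<exists>t u ww. (\<forall>k. t k > 0) \<and> t \<longlonglongrightarrow> 0 \<and>
      (\<forall>k. u k \<in> A) \<and> u \<longlonglongrightarrow> z \<and> ww \<longlonglongrightarrow> w \<and>
      (\<forall>k. u k + t k *\<^sub>R d + ((t k)^2 / 2) *\<^sub>R ww k \<in> \<Lambda>)}"

definition tasym2_rel :: "'a::real_normed_vector set \<Rightarrow> 'a set \<Rightarrow> 'a \<Rightarrow> 'a \<Rightarrow> 'a set" where
  "tasym2_rel \<Lambda> A z d = {w. \<exists>t r u ww. (\<forall>k. t k > 0) \<and> (\<forall>k. r k > 0) \<and>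
      t \<longlonglongrightarrow> 0 \<and> r \<longlonglongrightarrow> 0 \<and> (\<lambda>k. t k / r k) \<longlonglongrightarrow> 0 \<and>
      (\<forall>k. u k \<in> A) \<and> u \<longlonglongrightarrow> z \<and> ww \<longlonglongrightarrow> w \<and>
      (\<forall>k. u k + t k *\<^sub>R d + (t k * r k / 2) *\<^sub>R ww k \<in> \<Lambda>)}"

text \<open>g_eps(S) = g(S) + eps diam(S) B; the whole space if S is unbounded (diam = +infinity).\<close>
definition g_eps :: "('a::real_normed_vector \<Rightarrow> 'b::real_normed_vector) \<Rightarrow> real \<Rightarrow> 'a set \<Rightarrow> 'b set" where
  "g_eps g \<epsilon> S = (if bounded S then {y + z | y z. y \<in> g ` S \<and> z \<in> cball 0 (\<epsilon> * diameter S)} else UNIV)"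

end

theory Submission
  imports Defs
begin

text \<open>
  A sequence realising \<open>w\<close> in the second-order set of \<open>\<Phi>\<close> has the form
  \<open>x\<^sub>k = u\<^sub>k + t\<^sub>k e\<^sub>k\<close> with \<open>u\<^sub>k \<in> S\<close> and \<open>e\<^sub>k = d + (r\<^sub>k/2) w\<^sub>k\<close>
  (\<open>r\<^sub>k = t\<^sub>k\<close> for the outer set). Expanding \<open>g\<close> to second order at the moving base point
  \<open>u\<^sub>k\<close>, with a remainder that is \<open>o(t\<^sub>k\<^sup>2)\<close> because \<open>\<nabla>\<^sup>2g\<close> is continuous at \<open>x\<close>, gives
  \<open>g(x\<^sub>k) = v\<^sub>k + t\<^sub>k \<nabla>g(x)d + (t\<^sub>k r\<^sub>k/2) z\<^sub>k\<close> where \<open>z\<^sub>k\<close> tends to the claimed limit and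
  \<open>v\<^sub>k = g(u\<^sub>k) + t\<^sub>k (\<nabla>g(u\<^sub>k) - \<nabla>g(x)) d\<close>. The points \<open>v\<^sub>k\<close> need not lie in \<open>g(S)\<close>, but
  \<open>\<nabla>g\<close> is locally Lipschitz, so \<open>|v\<^sub>k - g(u\<^sub>k)| \<le> M t\<^sub>k |u\<^sub>k - x| |d|\<close>, which is eventually
  below \<open>\<epsilon> diam(S)\<close>: this is why the relative sets are taken with respect to \<open>g\<^sub>\<epsilon>(S)\<close>.
\<close>

lemma has_derivative_along_line:
  fixes F :: "'a::real_normed_vector \<Rightarrow> 'b::real_normed_vector" and F' :: "'a \<Rightarrow> ('a \<Rightarrow>\<^sub>L 'b)"
  assumes F': "\<And>x. (F has_derivative blinfun_apply (F' x)) (at x)"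
  shows "((\<lambda>s. F (u + s *\<^sub>R e)) has_derivative (\<lambda>h. h *\<^sub>R F' (u + s *\<^sub>R e) e)) (at s within T)"
proof -
  have "((\<lambda>s. u + s *\<^sub>R e) has_derivative (\<lambda>h. h *\<^sub>R e)) (at s within T)"
    by (auto intro!: derivative_eq_intros)
  from has_derivative_compose[OF this F'] show ?thesis
    by (simp add: blinfun.scaleR_right)
qed

lemma linearization_bound_along_segment:
  fixes F :: "'a::real_normed_vector \<Rightarrow> 'b::real_normed_vector" and F' :: "'a \<Rightarrow> ('a \<Rightarrow>\<^sub>L 'b)"
  assumes F': "\<And>x. (F has_derivative blinfun_apply (F' x)) (at x)"
    and t: "t \<ge> 0"
    and B: "\<And>s. s \<in> {0..t} \<Longrightarrow> norm (F' (u + s *\<^sub>R e) - F' u) \<le> B"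
  shows "norm (F (u + t *\<^sub>R e) - F u - t *\<^sub>R F' u e) \<le> t * (B * norm e)"
proof -
  have B0: "B \<ge> 0" using B[of 0] t by auto
  have "norm ((\<lambda>s. F (u + s *\<^sub>R e)) t - (\<lambda>s. F (u + s *\<^sub>R e)) 0 - (\<lambda>h. h *\<^sub>R F' (u + 0 *\<^sub>R e) e) (t - 0))
      \<le> norm (t - 0) * (B * norm e)"
  proof (rule differentiable_bound_linearization[where S="{0..t}"])
    show "0 + x *\<^sub>R (t - 0) \<in> {0..t}" if "x \<in> {0..1}" for x
      using that t by (auto intro: mult_left_le_one_le)
    show "((\<lambda>s. F (u + s *\<^sub>R e)) has_derivative (\<lambda>h. h *\<^sub>R F' (u + x *\<^sub>R e) e)) (at x within {0..t})" for x
      by (rule has_derivative_along_line[OF F'])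
    show "0 \<in> {0..t}" using t by auto
    show "onorm ((\<lambda>h. h *\<^sub>R F' (u + x *\<^sub>R e) e) - (\<lambda>h. h *\<^sub>R F' (u + 0 *\<^sub>R e) e)) \<le> B * norm e"
      if x: "x \<in> {0..t}" for x
    proof (rule onorm_bound)
      show "0 \<le> B * norm e" using B0 by simp
      fix h :: real
      have "norm (h *\<^sub>R F' (u + x *\<^sub>R e) e - h *\<^sub>R F' u e) = \<bar>h\<bar> * norm ((F' (u + x *\<^sub>R e) - F' u) e)"
        by (simp add: blinfun.diff_left flip: scaleR_diff_right)
      also have "\<dots> \<le> \<bar>h\<bar> * (B * norm e)"
        using B[OF x] by (intro mult_left_mono order_trans[OF norm_blinfun] mult_right_mono) auto
      finally show "norm (((\<lambda>h. h *\<^sub>R F' (u + x *\<^sub>R e) e) - (\<lambda>h. h *\<^sub>R F' (u + 0 *\<^sub>R e) e)) h) \<le> B * norm e * norm h"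
        by (simp add: mult_ac)
    qed
  qed
  then show ?thesis using t by simp
qed

lemma second_order_taylor_bound_along_segment:
  fixes g :: "'a::real_normed_vector \<Rightarrow> 'b::real_normed_vector"
    and Dg :: "'a \<Rightarrow> ('a \<Rightarrow>\<^sub>L 'b)" and D2g :: "'a \<Rightarrow> ('a \<Rightarrow>\<^sub>L ('a \<Rightarrow>\<^sub>L 'b))"
  assumes g_D: "\<And>x. (g has_derivative blinfun_apply (Dg x)) (at x)"
    and Dg_D: "\<And>x. (Dg has_derivative blinfun_apply (D2g x)) (at x)"
    and t: "t \<ge> 0"
    and B: "\<And>s. s \<in> {0..t} \<Longrightarrow> norm (D2g (u + s *\<^sub>R e) - D2g u) \<le> B"
  shows "norm (g (u + t *\<^sub>R e) - g u - t *\<^sub>R Dg u e - (t\<^sup>2 / 2) *\<^sub>R D2g u e e) \<le> B * norm e ^ 2 * t\<^sup>2"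
proof -
  have B0: "B \<ge> 0" using B[of 0] t by auto
  have Dg_lin: "norm (Dg (u + s *\<^sub>R e) - Dg u - s *\<^sub>R D2g u e) \<le> t * (B * norm e)" if s: "s \<in> {0..t}" for s
  proof -
    have "norm (Dg (u + s *\<^sub>R e) - Dg u - s *\<^sub>R D2g u e) \<le> s * (B * norm e)"
      using s by (intro linearization_bound_along_segment[OF Dg_D]) (auto intro: B)
    also have "\<dots> \<le> t * (B * norm e)" using s B0 by (intro mult_right_mono) auto
    finally show ?thesis .
  qed
  define \<psi> where "\<psi> s = g (u + s *\<^sub>R e) - s *\<^sub>R Dg u e - (s\<^sup>2 / 2) *\<^sub>R D2g u e e" for s
  define \<psi>' where "\<psi>' s h = h *\<^sub>R (Dg (u + s *\<^sub>R e) - Dg u - s *\<^sub>R D2g u e) e" for s h :: real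
  have "norm (\<psi> t - \<psi> 0) \<le> (t * (B * norm e) * norm e) * norm (t - 0)"
  proof (rule differentiable_bound[where S="{0..t}" and f'=\<psi>'])
    show "t \<in> {0..t}" "0 \<in> {0..t}" using t by auto
    fix s assume s: "s \<in> {0..t}"
    show "(\<psi> has_derivative \<psi>' s) (at s within {0..t})"
      unfolding \<psi>_def
    proof (rule has_derivative_eq_rhs)
      show "((\<lambda>s. g (u + s *\<^sub>R e) - s *\<^sub>R Dg u e - (s\<^sup>2 / 2) *\<^sub>R D2g u e e) has_derivative
          (\<lambda>h. h *\<^sub>R Dg (u + s *\<^sub>R e) e - h *\<^sub>R Dg u e - (h * s) *\<^sub>R D2g u e e)) (at s within {0..t})"
        by (rule has_derivative_along_line[OF g_D] derivative_eq_intros refl | force simp: algebra_simps)+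
    qed (simp add: \<psi>'_def fun_eq_iff blinfun.diff_left blinfun.add_left blinfun.scaleR_left algebra_simps)
    show "onorm (\<psi>' s) \<le> t * (B * norm e) * norm e"
    proof (rule onorm_bound)
      show "0 \<le> t * (B * norm e) * norm e" using B0 t by simp
      fix h :: real
      have "norm (\<psi>' s h) \<le> \<bar>h\<bar> * (norm (Dg (u + s *\<^sub>R e) - Dg u - s *\<^sub>R D2g u e) * norm e)"
        unfolding \<psi>'_def by (simp add: mult_left_mono norm_blinfun)
      also have "\<dots> \<le> \<bar>h\<bar> * (t * (B * norm e) * norm e)"
        by (intro mult_left_mono mult_right_mono Dg_lin s) auto
      finally show "norm (\<psi>' s h) \<le> t * (B * norm e) * norm e * norm h"
        by (simp add: mult_ac)
    qed
  qed simp
  moreover have "\<psi> t - \<psi> 0 = g (u + t *\<^sub>R e) - g u - t *\<^sub>R Dg u e - (t\<^sup>2 / 2) *\<^sub>R D2g u e e"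
    by (simp add: \<psi>_def algebra_simps)
  ultimately show ?thesis using t by (simp add: power2_eq_square mult_ac)
qed

lemma second_order_remainder_eventually_small:
  fixes g :: "'a::real_normed_vector \<Rightarrow> 'b::real_normed_vector"
    and Dg :: "'a \<Rightarrow> ('a \<Rightarrow>\<^sub>L 'b)" and D2g :: "'a \<Rightarrow> ('a \<Rightarrow>\<^sub>L ('a \<Rightarrow>\<^sub>L 'b))"
  assumes g_D: "\<And>x. (g has_derivative blinfun_apply (Dg x)) (at x)"
    and Dg_D: "\<And>x. (Dg has_derivative blinfun_apply (D2g x)) (at x)"
    and cont: "isCont D2g x0"
    and u: "u \<longlonglongrightarrow> x0" and te: "(\<lambda>k. t k *\<^sub>R e k) \<longlonglongrightarrow> 0" and t: "\<And>k. t k \<ge> 0"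
    and \<eta>: "\<eta> > 0"
  shows "eventually (\<lambda>k. norm (g (u k + t k *\<^sub>R e k) - g (u k) - t k *\<^sub>R Dg (u k) (e k)
            - ((t k)\<^sup>2 / 2) *\<^sub>R D2g (u k) (e k) (e k)) \<le> \<eta> * norm (e k) ^ 2 * (t k)\<^sup>2) sequentially"
proof -
  obtain \<delta> where \<delta>: "\<delta> > 0" "\<And>z. dist z x0 < \<delta> \<Longrightarrow> dist (D2g z) (D2g x0) < \<eta> / 2"
    using cont \<eta> unfolding continuous_at_eps_delta by (metis half_gt_zero)
  have "eventually (\<lambda>k. dist (u k) x0 < \<delta> / 2) sequentially"
    using u \<delta>(1) unfolding tendsto_iff by (meson half_gt_zero)
  moreover have "eventually (\<lambda>k. norm (t k *\<^sub>R e k) < \<delta> / 2) sequentially"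
    using tendsto_norm_zero[OF te] \<delta>(1) by (intro order_tendstoD) auto
  ultimately show ?thesis
  proof eventually_elim
    case (elim k)
    have "norm (D2g (u k + s *\<^sub>R e k) - D2g (u k)) \<le> \<eta>" if s: "s \<in> {0..t k}" for s
    proof -
      have "norm (s *\<^sub>R e k) \<le> norm (t k *\<^sub>R e k)" using s by (auto intro: mult_right_mono)
      then have "dist (u k + s *\<^sub>R e k) x0 < \<delta>"
        using elim norm_triangle_ineq[of "u k - x0" "s *\<^sub>R e k"] by (simp add: dist_norm algebra_simps)
      then have "dist (D2g (u k + s *\<^sub>R e k)) (D2g x0) < \<eta> / 2" by (rule \<delta>(2))
      moreover have "dist (D2g (u k)) (D2g x0) < \<eta> / 2" using elim(1) \<delta> by auto
      ultimately show ?thesis using dist_triangle_half_l[of "D2g (u k + s *\<^sub>R e k)" "D2g x0" \<eta> "D2g (u k)"]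
        by (simp add: dist_norm dist_commute)
    qed
    then show ?case by (intro second_order_taylor_bound_along_segment[OF g_D Dg_D t])
  qed
qed

lemma second_order_remainder_tendsto_zero:
  fixes g :: "'a::real_normed_vector \<Rightarrow> 'b::real_normed_vector"
    and Dg :: "'a \<Rightarrow> ('a \<Rightarrow>\<^sub>L 'b)" and D2g :: "'a \<Rightarrow> ('a \<Rightarrow>\<^sub>L ('a \<Rightarrow>\<^sub>L 'b))"
  assumes g_D: "\<And>x. (g has_derivative blinfun_apply (Dg x)) (at x)"
    and Dg_D: "\<And>x. (Dg has_derivative blinfun_apply (D2g x)) (at x)"
    and cont: "isCont D2g x0"
    and u: "u \<longlonglongrightarrow> x0" and t: "t \<longlonglongrightarrow> 0" and tpos: "\<And>k. t k > 0" and e: "e \<longlonglongrightarrow> d"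
  shows "(\<lambda>k. (1 / (t k)\<^sup>2) *\<^sub>R (g (u k + t k *\<^sub>R e k) - g (u k) - t k *\<^sub>R Dg (u k) (e k)
            - ((t k)\<^sup>2 / 2) *\<^sub>R D2g (u k) (e k) (e k))) \<longlonglongrightarrow> 0"
  unfolding tendsto_iff
proof (intro allI impI)
  fix \<eta> :: real assume \<eta>: "\<eta> > 0"
  define C where "C = (norm d + 1)\<^sup>2"
  have C: "C > 0" unfolding C_def by (smt (verit) norm_ge_zero zero_less_power)
  have te: "(\<lambda>k. t k *\<^sub>R e k) \<longlonglongrightarrow> 0" using tendsto_scaleR[OF t e] by simp
  have "eventually (\<lambda>k. norm (e k) < norm d + 1) sequentially"
    using tendsto_norm[OF e] by (rule order_tendstoD) simp
  moreover have "eventually (\<lambda>k. norm (g (u k + t k *\<^sub>R e k) - g (u k) - t k *\<^sub>R Dg (u k) (e k)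
      - ((t k)\<^sup>2 / 2) *\<^sub>R D2g (u k) (e k) (e k)) \<le> \<eta> / (2 * C) * norm (e k) ^ 2 * (t k)\<^sup>2) sequentially"
    using \<eta> C tpos by (intro second_order_remainder_eventually_small[OF g_D Dg_D cont u te])
      (auto intro: less_imp_le)
  ultimately show "eventually (\<lambda>k. dist ((1 / (t k)\<^sup>2) *\<^sub>R (g (u k + t k *\<^sub>R e k) - g (u k) - t k *\<^sub>R Dg (u k) (e k)
      - ((t k)\<^sup>2 / 2) *\<^sub>R D2g (u k) (e k) (e k))) 0 < \<eta>) sequentially"
  proof eventually_elim
    case (elim k)
    have tk: "t k > 0" by (rule tpos)
    have "norm (e k) ^ 2 \<le> C" unfolding C_def using elim(1) by (intro power_mono) auto
    then have "\<eta> / (2 * C) * norm (e k) ^ 2 < \<eta>"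
      using \<eta> C by (simp add: field_simps)
    moreover have "(1 / (t k)\<^sup>2) * (\<eta> / (2 * C) * norm (e k) ^ 2 * (t k)\<^sup>2) = \<eta> / (2 * C) * norm (e k) ^ 2"
      using tk by simp
    ultimately show ?case
      using mult_left_mono[OF elim(2), of "1 / (t k)\<^sup>2"] tk by (simp add: dist_norm)
  qed
qed

text \<open>The outer second-order set is the case \<open>r = t\<close>, \<open>c = 1\<close>; the asymptotic cone the case \<open>c = 0\<close>.\<close>

lemma second_order_expansion_along_curve:
  fixes g :: "'a::real_normed_vector \<Rightarrow> 'b::real_normed_vector"
    and Dg :: "'a \<Rightarrow> ('a \<Rightarrow>\<^sub>L 'b)" and D2g :: "'a \<Rightarrow> ('a \<Rightarrow>\<^sub>L ('a \<Rightarrow>\<^sub>L 'b))"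
  assumes g_D: "\<And>x. (g has_derivative blinfun_apply (Dg x)) (at x)"
    and Dg_D: "\<And>x. (Dg has_derivative blinfun_apply (D2g x)) (at x)"
    and cont: "isCont D2g x0"
    and tpos: "\<And>k. t k > 0" and rpos: "\<And>k. r k > 0" and t: "t \<longlonglongrightarrow> 0" and r: "r \<longlonglongrightarrow> 0"
    and tr: "(\<lambda>k. t k / r k) \<longlonglongrightarrow> c" and u: "u \<longlonglongrightarrow> x0" and ww: "ww \<longlonglongrightarrow> w"
  obtains z where "z \<longlonglongrightarrow> Dg x0 w + c *\<^sub>R D2g x0 d d"
    and "\<And>k. g (u k + t k *\<^sub>R d + (t k * r k / 2) *\<^sub>R ww k)
               = g (u k) + t k *\<^sub>R Dg (u k) d + (t k * r k / 2) *\<^sub>R z k"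
proof
  define e where "e k = d + (r k / 2) *\<^sub>R ww k" for k
  have e: "e \<longlonglongrightarrow> d"
    using tendsto_add[OF tendsto_const tendsto_scaleR[OF tendsto_divide[OF r tendsto_const] ww]]
    by (simp add: e_def[abs_def])
  have curve: "u k + t k *\<^sub>R d + (t k * r k / 2) *\<^sub>R ww k = u k + t k *\<^sub>R e k" for k
    by (simp add: e_def scaleR_add_right)
  define R where "R k = g (u k + t k *\<^sub>R e k) - g (u k) - t k *\<^sub>R Dg (u k) (e k)
      - ((t k)\<^sup>2 / 2) *\<^sub>R D2g (u k) (e k) (e k)" for k
  define z where "z k = (2 / (t k * r k)) *\<^sub>R (g (u k + t k *\<^sub>R e k) - g (u k) - t k *\<^sub>R Dg (u k) d)" for k
  have z_eq: "z k = Dg (u k) (ww k) + (t k / r k) *\<^sub>R D2g (u k) (e k) (e k)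
      + (2 * (t k / r k)) *\<^sub>R ((1 / (t k)\<^sup>2) *\<^sub>R R k)" for k
  proof -
    have tk: "t k \<noteq> 0" and rk: "r k \<noteq> 0" using tpos[of k] rpos[of k] by auto
    have "g (u k + t k *\<^sub>R e k) - g (u k) - t k *\<^sub>R Dg (u k) d
        = R k + (t k * r k / 2) *\<^sub>R Dg (u k) (ww k) + ((t k)\<^sup>2 / 2) *\<^sub>R D2g (u k) (e k) (e k)"
      by (simp add: R_def e_def blinfun.add_right blinfun.scaleR_right algebra_simps power2_eq_square)
    then have "z k = (2 / (t k * r k)) *\<^sub>R R k + ((2 / (t k * r k)) * (t k * r k / 2)) *\<^sub>R Dg (u k) (ww k)
        + ((2 / (t k * r k)) * ((t k)\<^sup>2 / 2)) *\<^sub>R D2g (u k) (e k) (e k)"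
      by (simp only: z_def scaleR_add_right scaleR_scaleR)
    also have "\<dots> = ((2 * (t k / r k)) * (1 / (t k)\<^sup>2)) *\<^sub>R R k + Dg (u k) (ww k)
        + (t k / r k) *\<^sub>R D2g (u k) (e k) (e k)"
      using tk rk by (simp add: power2_eq_square)
    finally show ?thesis by (simp add: algebra_simps)
  qed
  have Dg_cont: "isCont Dg x0" using Dg_D has_derivative_continuous by blast
  have "z \<longlonglongrightarrow> Dg x0 w + c *\<^sub>R D2g x0 d d + (2 * c) *\<^sub>R 0"
    unfolding z_eq[abs_def]
    by (intro tendsto_intros isCont_tendsto_compose[OF Dg_cont u] isCont_tendsto_compose[OF cont u]
        ww e tr second_order_remainder_tendsto_zero[OF g_D Dg_D cont u t tpos e, folded R_def])
  then show "z \<longlonglongrightarrow> Dg x0 w + c *\<^sub>R D2g x0 d d" by simp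
  show "g (u k + t k *\<^sub>R d + (t k * r k / 2) *\<^sub>R ww k) = g (u k) + t k *\<^sub>R Dg (u k) d + (t k * r k / 2) *\<^sub>R z k" for k
    using tpos[of k] rpos[of k] by (simp add: curve z_def)
qed

lemma lipschitz_bound_of_continuous_derivative:
  fixes F :: "'a::euclidean_space \<Rightarrow> 'b::real_normed_vector" and F' :: "'a \<Rightarrow> ('a \<Rightarrow>\<^sub>L 'b)"
  assumes F': "\<And>x. (F has_derivative blinfun_apply (F' x)) (at x)"
    and cont: "continuous_on (cball x0 \<delta>) F'"
  obtains M where "M \<ge> 0" and "\<And>x. x \<in> cball x0 \<delta> \<Longrightarrow> norm (F x - F x0) \<le> M * norm (x - x0)"
proof -
  have "compact (F' ` cball x0 \<delta>)" by (intro compact_continuous_image cont) auto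
  then obtain M where M: "M > 0" "\<And>x. x \<in> cball x0 \<delta> \<Longrightarrow> norm (F' x) \<le> M"
    by (auto dest!: compact_imp_bounded simp: bounded_pos)
  have "norm (F x - F x0) \<le> M * norm (x - x0)" if x: "x \<in> cball x0 \<delta>" for x
  proof (rule differentiable_bound[of "cball x0 \<delta>" F "\<lambda>x. blinfun_apply (F' x)"])
    show "(F has_derivative blinfun_apply (F' y)) (at y within cball x0 \<delta>)" for y
      by (rule has_derivative_at_withinI[OF F'])
    show "onorm (blinfun_apply (F' y)) \<le> M" if "y \<in> cball x0 \<delta>" for y
      using M(2)[OF that] by (simp add: norm_blinfun.rep_eq)
  qed (use x in \<open>auto intro: order_trans[OF zero_le_dist]\<close>)
  with M(1) show ?thesis using that less_imp_le by blast
qed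

lemma eventually_in_g_eps:
  fixes g :: "'a::real_normed_vector \<Rightarrow> 'b::real_normed_vector" and L :: "'a \<Rightarrow> ('a \<Rightarrow>\<^sub>L 'b)"
  assumes L: "\<And>x. x \<in> cball x0 \<delta> \<Longrightarrow> norm (L x - L x0) \<le> M * norm (x - x0)"
    and M: "M \<ge> 0" and \<delta>: "\<delta> > 0" and \<epsilon>: "\<epsilon> > 0"
    and x0: "x0 \<in> S" and uS: "\<And>k. u k \<in> S" and u: "u \<longlonglongrightarrow> x0"
    and t: "t \<longlonglongrightarrow> 0" and t_nonneg: "\<And>k. t k \<ge> 0"
  shows "eventually (\<lambda>k. g (u k) + t k *\<^sub>R (L (u k) d - L x0 d) \<in> g_eps g \<epsilon> S) sequentially"
proof (cases "bounded S")
  case False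
  then show ?thesis by (simp add: g_eps_def)
next
  case True
  have "eventually (\<lambda>k. dist (u k) x0 \<le> \<delta>) sequentially"
    using tendsto_iff[THEN iffD1, OF u, rule_format, OF \<delta>] by (rule eventually_mono) simp
  moreover have "eventually (\<lambda>k. t k * (M * norm d) < \<epsilon>) sequentially"
    using tendsto_mult_left_zero[OF t, of "M * norm d"] \<epsilon> by (rule order_tendstoD)
  ultimately show ?thesis
  proof eventually_elim
    case (elim k)
    have "norm (t k *\<^sub>R (L (u k) d - L x0 d)) \<le> t k * (norm (L (u k) - L x0) * norm d)"
      using t_nonneg[of k] by (simp add: blinfun.diff_left[symmetric] mult_left_mono norm_blinfun)
    also have "\<dots> \<le> t k * (M * norm (u k - x0) * norm d)"
      using elim(1) t_nonneg[of k] by (intro mult_left_mono mult_right_mono L) (auto simp: dist_commute)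
    also have "\<dots> = (t k * (M * norm d)) * norm (u k - x0)" by (simp add: mult_ac)
    also have "\<dots> \<le> \<epsilon> * diameter S"
      using elim(2) t_nonneg[of k] M \<epsilon> diameter_bounded_bound[OF True uS x0]
      by (intro mult_mono) (auto simp: dist_norm)
    finally have "t k *\<^sub>R (L (u k) d - L x0 d) \<in> cball 0 (\<epsilon> * diameter S)" by simp
    with uS[of k] show ?case unfolding g_eps_def if_P[OF True] by blast
  qed
qed

lemma base_points_in_g_eps:
  fixes g :: "'a::euclidean_space \<Rightarrow> 'b::real_normed_vector"
    and Dg :: "'a \<Rightarrow> ('a \<Rightarrow>\<^sub>L 'b)" and D2g :: "'a \<Rightarrow> ('a \<Rightarrow>\<^sub>L ('a \<Rightarrow>\<^sub>L 'b))"
  assumes g_D: "\<And>x. (g has_derivative blinfun_apply (Dg x)) (at x)"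
    and Dg_D: "\<And>x. (Dg has_derivative blinfun_apply (D2g x)) (at x)"
    and D2g_cont: "continuous_on UNIV D2g" and \<epsilon>: "\<epsilon> > 0"
    and x0: "x0 \<in> S" and uS: "\<And>k. u k \<in> S" and u: "u \<longlonglongrightarrow> x0"
    and t: "t \<longlonglongrightarrow> 0" and tpos: "\<And>k. t k > 0"
  shows "eventually (\<lambda>k. g (u k) + t k *\<^sub>R (Dg (u k) d - Dg x0 d) \<in> g_eps g \<epsilon> S) sequentially"
    and "(\<lambda>k. g (u k) + t k *\<^sub>R (Dg (u k) d - Dg x0 d)) \<longlonglongrightarrow> g x0"
proof -
  obtain M where "M \<ge> 0" "\<And>x. x \<in> cball x0 1 \<Longrightarrow> norm (Dg x - Dg x0) \<le> M * norm (x - x0)"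
    using lipschitz_bound_of_continuous_derivative[OF Dg_D continuous_on_subset[OF D2g_cont]] by blast
  then show "eventually (\<lambda>k. g (u k) + t k *\<^sub>R (Dg (u k) d - Dg x0 d) \<in> g_eps g \<epsilon> S) sequentially"
    using \<epsilon> x0 uS u t tpos by (intro eventually_in_g_eps[where \<delta>=1]) (auto intro: less_imp_le)
  have "isCont g x0" "isCont Dg x0"
    using g_D Dg_D has_derivative_continuous by blast+
  then have "(\<lambda>k. g (u k) + t k *\<^sub>R (Dg (u k) d - Dg x0 d)) \<longlonglongrightarrow> g x0 + 0 *\<^sub>R (Dg x0 d - Dg x0 d)"
    by (intro tendsto_intros isCont_tendsto_compose[where g=g] isCont_tendsto_compose[where g=Dg] u t)
  then   show "(\<lambda>k. g (u k) + t k *\<^sub>R (Dg (u k) d - Dg x0 d)) \<longlonglongrightarrow> g x0" by simp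
qed

lemma tset2_rel_eventually_memI:
  assumes "\<And>k. t k > 0" "t \<longlonglongrightarrow> 0" "eventually (\<lambda>k. u k \<in> A) sequentially"
    "u \<longlonglongrightarrow> z" "ww \<longlonglongrightarrow> w" "\<And>k. u k + t k *\<^sub>R d + ((t k)\<^sup>2 / 2) *\<^sub>R ww k \<in> \<Lambda>"
  shows "w \<in> tset2_rel \<Lambda> A z d"
proof -
  from assms(3) obtain N where "\<And>k. k \<ge> N \<Longrightarrow> u k \<in> A" by (auto simp: eventually_sequentially)
  with assms show ?thesis unfolding tset2_rel_def
    by (intro CollectI exI[of _ "\<lambda>k. t (k + N)"] exI[of _ "\<lambda>k. u (k + N)"] exI[of _ "\<lambda>k. ww (k + N)"])
      (auto simp: LIMSEQ_ignore_initial_segment)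
qed

lemma tasym2_rel_eventually_memI:
  assumes "\<And>k. t k > 0" "\<And>k. r k > 0" "t \<longlonglongrightarrow> 0" "r \<longlonglongrightarrow> 0" "(\<lambda>k. t k / r k) \<longlonglongrightarrow> 0"
    "eventually (\<lambda>k. u k \<in> A) sequentially" "u \<longlonglongrightarrow> z" "ww \<longlonglongrightarrow> w"
    "\<And>k. u k + t k *\<^sub>R d + (t k * r k / 2) *\<^sub>R ww k \<in> \<Lambda>"
  shows "w \<in> tasym2_rel \<Lambda> A z d"
proof -
  from assms(6) obtain N where "\<And>k. k \<ge> N \<Longrightarrow> u k \<in> A" by (auto simp: eventually_sequentially)
  moreover have "(\<lambda>k. t (k + N) / r (k + N)) \<longlonglongrightarrow> 0"
    using LIMSEQ_ignore_initial_segment[OF assms(5), of N] by simp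
  ultimately show ?thesis using assms unfolding tasym2_rel_def
    by (intro CollectI exI[of _ "\<lambda>k. t (k + N)"] exI[of _ "\<lambda>k. r (k + N)"] exI[of _ "\<lambda>k. u (k + N)"]
        exI[of _ "\<lambda>k. ww (k + N)"]) (auto simp: LIMSEQ_ignore_initial_segment)
qed

lemma tset2_rel_preimage:
  fixes g :: "'a::euclidean_space \<Rightarrow> 'b::real_normed_vector"
    and Dg :: "'a \<Rightarrow> ('a \<Rightarrow>\<^sub>L 'b)" and D2g :: "'a \<Rightarrow> ('a \<Rightarrow>\<^sub>L ('a \<Rightarrow>\<^sub>L 'b))"
  assumes g_D: "\<And>x. (g has_derivative blinfun_apply (Dg x)) (at x)"
    and Dg_D: "\<And>x. (Dg has_derivative blinfun_apply (D2g x)) (at x)"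
    and D2g_cont: "continuous_on UNIV D2g" and \<epsilon>: "\<epsilon> > 0" and x0: "x0 \<in> S"
    and w: "w \<in> tset2_rel {x. g x \<in> K} S x0 d"
  shows "Dg x0 w + D2g x0 d d \<in> tset2_rel K (g_eps g \<epsilon> S) (g x0) (Dg x0 d)"
proof -
  obtain t u ww where tpos: "\<And>k. t k > 0" and t: "t \<longlonglongrightarrow> 0" and uS: "\<And>k. u k \<in> S"
    and u: "u \<longlonglongrightarrow> x0" and ww: "ww \<longlonglongrightarrow> w"
    and inK: "\<And>k. g (u k + t k *\<^sub>R d + ((t k)\<^sup>2 / 2) *\<^sub>R ww k) \<in> K"
    using w unfolding tset2_rel_def by blast
  have cont: "isCont D2g x0" using D2g_cont by (simp add: continuous_on_eq_continuous_at)
  have tt: "(\<lambda>k. t k / t k) \<longlonglongrightarrow> 1" using tpos by (simp add: less_imp_neq[symmetric])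
  obtain z where z: "z \<longlonglongrightarrow> Dg x0 w + 1 *\<^sub>R D2g x0 d d"
    and expand: "\<And>k. g (u k + t k *\<^sub>R d + (t k * t k / 2) *\<^sub>R ww k)
                       = g (u k) + t k *\<^sub>R Dg (u k) d + (t k * t k / 2) *\<^sub>R z k"
    using second_order_expansion_along_curve[OF g_D Dg_D cont tpos tpos t t tt u ww]
    by auto
  show ?thesis
  proof (rule tset2_rel_eventually_memI[OF tpos t base_points_in_g_eps[OF g_D Dg_D D2g_cont \<epsilon> x0 uS u t tpos]])
    show "z \<longlonglongrightarrow> Dg x0 w + D2g x0 d d" using z by simp
    show "g (u k) + t k *\<^sub>R (Dg (u k) d - Dg x0 d) + t k *\<^sub>R Dg x0 d + ((t k)\<^sup>2 / 2) *\<^sub>R z k \<in> K" for k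
      using inK[of k] unfolding expand[of k, folded power2_eq_square] by (simp add: algebra_simps)
  qed
qed

lemma tasym2_rel_preimage:
  fixes g :: "'a::euclidean_space \<Rightarrow> 'b::real_normed_vector"
    and Dg :: "'a \<Rightarrow> ('a \<Rightarrow>\<^sub>L 'b)" and D2g :: "'a \<Rightarrow> ('a \<Rightarrow>\<^sub>L ('a \<Rightarrow>\<^sub>L 'b))"
  assumes g_D: "\<And>x. (g has_derivative blinfun_apply (Dg x)) (at x)"
    and Dg_D: "\<And>x. (Dg has_derivative blinfun_apply (D2g x)) (at x)"
    and D2g_cont: "continuous_on UNIV D2g" and \<epsilon>: "\<epsilon> > 0" and x0: "x0 \<in> S"
    and w: "w \<in> tasym2_rel {x. g x \<in> K} S x0 d"
  shows "Dg x0 w \<in> tasym2_rel K (g_eps g \<epsilon> S) (g x0) (Dg x0 d)"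
proof -
  obtain t r u ww where tpos: "\<And>k. t k > 0" and rpos: "\<And>k. r k > 0" and t: "t \<longlonglongrightarrow> 0"
    and r: "r \<longlonglongrightarrow> 0" and tr: "(\<lambda>k. t k / r k) \<longlonglongrightarrow> 0" and uS: "\<And>k. u k \<in> S"
    and u: "u \<longlonglongrightarrow> x0" and ww: "ww \<longlonglongrightarrow> w"
    and inK: "\<And>k. g (u k + t k *\<^sub>R d + (t k * r k / 2) *\<^sub>R ww k) \<in> K"
    using w unfolding tasym2_rel_def by blast
  have cont: "isCont D2g x0" using D2g_cont by (simp add: continuous_on_eq_continuous_at)
  obtain z where z: "z \<longlonglongrightarrow> Dg x0 w + 0 *\<^sub>R D2g x0 d d"
    and expand: "\<And>k. g (u k + t k *\<^sub>R d + (t k * r k / 2) *\<^sub>R ww k)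
                       = g (u k) + t k *\<^sub>R Dg (u k) d + (t k * r k / 2) *\<^sub>R z k"
    using second_order_expansion_along_curve[OF g_D Dg_D cont tpos rpos t r tr u ww]
    by auto
  show ?thesis
  proof (rule tasym2_rel_eventually_memI[OF tpos rpos t r tr base_points_in_g_eps[OF g_D Dg_D D2g_cont \<epsilon> x0 uS u t tpos]])
    show "z \<longlonglongrightarrow> Dg x0 w" using z by simp
    show "g (u k) + t k *\<^sub>R (Dg (u k) d - Dg x0 d) + t k *\<^sub>R Dg x0 d + (t k * r k / 2) *\<^sub>R z k \<in> K" for k
      using inK[of k] unfolding expand[of k] by (simp add: algebra_simps)
  qed
qed

theorem proposition4p3:
  fixes g :: "'n::euclidean_space \<Rightarrow> 'm::euclidean_space"
    and Dg :: "'n \<Rightarrow> ('n \<Rightarrow>\<^sub>L 'm)"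
    and D2g :: "'n \<Rightarrow> ('n \<Rightarrow>\<^sub>L ('n \<Rightarrow>\<^sub>L 'm))"
    and K :: "'m set" and S :: "'n set" and xb d :: 'n and \<epsilon> :: real
  assumes g_D: "\<And>x. (g has_derivative (\<lambda>v. blinfun_apply (Dg x) v)) (at x)"
    and Dg_D: "\<And>x. (Dg has_derivative (\<lambda>v. blinfun_apply (D2g x) v)) (at x)"
    and D2g_cont: "continuous_on UNIV D2g"
    and K_closed: "closed K"
    and S_sub: "S \<subseteq> {x. g x \<in> K}"
    and xb_S: "xb \<in> S"
    and d_T: "d \<in> tcone_rel {x. g x \<in> K} S xb"
    and eps_pos: "\<epsilon> > 0"
  shows "tset2_rel {x. g x \<in> K} S xb d \<subseteq>
           {w. Dg xb w + D2g xb d d \<in> tset2_rel K (g_eps g \<epsilon> S) (g xb) (Dg xb d)}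
       \<and> tasym2_rel {x. g x \<in> K} S xb d \<subseteq>
           {w. Dg xb w \<in> tasym2_rel K (g_eps g \<epsilon> S) (g xb) (Dg xb d)}"
  using tset2_rel_preimage[OF g_D Dg_D D2g_cont eps_pos xb_S]
    tasym2_rel_preimage[OF g_D Dg_D D2g_cont eps_pos xb_S]
  by (simp add: eta_contract_eq subsetI)

end
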